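(* For $|q|<1$ and nonzero complex $a,b,c$, $$\begin{aligned}&(q;q^2)_\infty^2\big([a,b,-c;q]_\infty+[a,-b,c;q]_\infty+[-a,b,c;q]_\infty\big)\\&\quad=(a,q/a;q)_\infty[bc,bq/c;q^2]_\infty+(b,q/b;q)_\infty[ac,aq/c;q^2]_\infty+(c,q/c;q)_\infty[ab,aq/b;q^2]_\infty.\end{aligned}$$
   Context: $(z;p)_\infty=\prod_{k\ge0}(1-zp^k)$, $(z_1,\dots,z_n;p)_\infty=\prod_j(z_j;p)_\infty$, $[z;p]_\infty=(z,p/z;p)_\infty$, and $[z_1,\dots,z_n;p]_\infty=\prod_j[z_j;p]_\infty$. *)

theory Defs
  imports "HOL-Analysis.Analysis"
begin

definition qpoch_inf :: "complex \<Rightarrow> complex \<Rightarrow> complex" where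
  "qpoch_inf z p = (\<Prod>k. (1 - z * p ^ k))"

definition qtheta :: "complex \<Rightarrow> complex \<Rightarrow> complex" where
  "qtheta z p = qpoch_inf z p * qpoch_inf (p / z) p"

end

theory Submission
  imports Defs
begin

text \<open>
  By the Jacobi triple product, (q;q)_\<infinity> [z;q]_\<infinity> = \<Sum>_j (-1)^j q^(j(j-1)/2) z^j;
  it follows from the q-binomial theorem for \<Prod>_{i<2n} (1 - z q^(i-n)) by letting n \<rightarrow> \<infinity>
  under Tannery's theorem. In the product of two such series for [-b,c;q]_\<infinity> + [b,-c;q]_\<infinity>
  the terms with m + n odd cancel, and those with m + n even, written m = i + j, n = i - j,
  reassemble into 2 (q^2;q^2)_\<infinity>^2 [bc, bq/c; q^2]_\<infinity>. With Euler's
  (q;q)_\<infinity> = (q;q^2)_\<infinity> (q^2;q^2)_\<infinity> this gives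
  (q;q^2)_\<infinity>^2 ([-b,c;q]_\<infinity> + [b,-c;q]_\<infinity>) = 2 [bc, bq/c; q^2]_\<infinity>, and the theorem is half
  the sum of this identity times [a;q]_\<infinity> and of its analogues for the pairs (a,c) and (a,b)
  times [b;q]_\<infinity> and [c;q]_\<infinity>.
\<close>

section \<open>Infinite q-Pochhammer products\<close>

lemma power_neq_one_if_norm_less_one:
  fixes q :: "'a::real_normed_div_algebra"
  assumes "norm q < 1" and "n > 0"
  shows "q ^ n \<noteq> 1"
  using assms by (metis norm_ge_zero norm_one norm_power power_less_one_iff less_irrefl)

lemma convergent_prod_qpoch:
  fixes x q :: complex
  assumes "norm q < 1"
  shows "convergent_prod (\<lambda>k. 1 - x * q ^ k)"
proof -
  have "summable (\<lambda>k. norm x * norm q ^ k)"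
    using assms by (intro summable_mult summable_geometric) auto
  hence "summable (\<lambda>k. norm ((1 - x * q ^ k) - 1))"
    by (simp add: norm_mult norm_power)
  thus ?thesis
    by (intro abs_convergent_prod_imp_convergent_prod summable_imp_abs_convergent_prod)
qed

lemma qpoch_inf_LIMSEQ:
  fixes x q :: complex
  assumes "norm q < 1"
  shows "(\<lambda>n. \<Prod>k<n. 1 - x * q ^ k) \<longlonglongrightarrow> qpoch_inf x q"
proof -
  have "(\<lambda>n. \<Prod>k\<le>n. 1 - x * q ^ k) \<longlonglongrightarrow> qpoch_inf x q"
    unfolding qpoch_inf_def by (rule convergent_prod_LIMSEQ[OF convergent_prod_qpoch[OF assms]])
  hence "(\<lambda>n. \<Prod>k<Suc n. 1 - x * q ^ k) \<longlonglongrightarrow> qpoch_inf x q"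
    by (simp add: lessThan_Suc_atMost)
  thus ?thesis by (rule LIMSEQ_imp_Suc)
qed

lemma qpoch_inf_nonzero:
  fixes x q :: complex
  assumes "norm q < 1" and "\<And>k. x * q ^ k \<noteq> 1"
  shows "qpoch_inf x q \<noteq> 0"
  unfolding qpoch_inf_def using assms convergent_prod_qpoch[OF assms(1)]
  by (intro prodinf_nonzero) auto

lemma qpoch_inf_self_nonzero:
  fixes q :: complex
  assumes "norm q < 1"
  shows "qpoch_inf q q \<noteq> 0"
  using assms power_neq_one_if_norm_less_one[OF assms]
  by (intro qpoch_inf_nonzero) (simp_all flip: power_Suc)

lemma qpoch_inf_base_0: "qpoch_inf z 0 = 1 - z"
proof -
  have "qpoch_inf z 0 = (\<Prod>n\<in>{0}. 1 - z * 0 ^ n)"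
    unfolding qpoch_inf_def by (rule prodinf_finite) auto
  thus ?thesis by simp
qed

lemma prod_lessThan_double:
  fixes f :: "nat \<Rightarrow> 'a::comm_monoid_mult"
  shows "(\<Prod>k<2 * n. f k) = (\<Prod>k<n. f (2 * k)) * (\<Prod>k<n. f (2 * k + 1))"
  by (induction n) (simp_all add: mult_ac)

lemma qpoch_inf_self_eq_odd_even:
  fixes q :: complex
  assumes "norm q < 1"
  shows "qpoch_inf q q = qpoch_inf q (q^2) * qpoch_inf (q^2) (q^2)"
proof -
  have q2: "norm (q^2) < 1"
    using assms by (simp add: norm_power power_less_one_iff)
  have "(\<lambda>n. \<Prod>k<2 * n. 1 - q * q ^ k) \<longlonglongrightarrow> qpoch_inf q q"
    by (rule filterlim_compose[OF qpoch_inf_LIMSEQ[OF assms] mult_nat_left_at_top]) simp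
  moreover have "(\<lambda>n. (\<Prod>k<n. 1 - q * (q^2) ^ k) * (\<Prod>k<n. 1 - q^2 * (q^2) ^ k))
      \<longlonglongrightarrow> qpoch_inf q (q^2) * qpoch_inf (q^2) (q^2)"
    by (intro tendsto_mult qpoch_inf_LIMSEQ q2)
  moreover have "(\<Prod>k<2 * n. 1 - q * q ^ k)
      = (\<Prod>k<n. 1 - q * (q^2) ^ k) * (\<Prod>k<n. 1 - q^2 * (q^2) ^ k)" for n
    unfolding prod_lessThan_double by (simp add: power_mult power2_eq_square power_mult_distrib mult_ac)
  ultimately show ?thesis
    using LIMSEQ_unique by auto
qed

section \<open>Gaussian binomial coefficients\<close>

fun qbinomial :: "'a::comm_ring_1 \<Rightarrow> nat \<Rightarrow> nat \<Rightarrow> 'a" where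
  "qbinomial q 0 k = (if k = 0 then 1 else 0)"
| "qbinomial q (Suc n) 0 = 1"
| "qbinomial q (Suc n) (Suc k) = q ^ Suc k * qbinomial q n (Suc k) + qbinomial q n k"

lemma qbinomial_eq_0: "n < k \<Longrightarrow> qbinomial q n k = 0"
  by (induction q n k rule: qbinomial.induct) auto

lemma Suc_choose_two: "Suc k choose 2 = (k choose 2) + k"
  by (simp add: numeral_2_eq_2)

lemma qbinomial_theorem:
  fixes q x :: "'a::comm_ring_1"
  shows "(\<Prod>i<n. 1 + x * q ^ i) = (\<Sum>k\<le>n. qbinomial q n k * q ^ (k choose 2) * x ^ k)"
proof (induction n arbitrary: x)
  case 0
  thus ?case by (simp add: numeral_2_eq_2)
next
  case (Suc n)
  have "(\<Prod>i<Suc n. 1 + x * q ^ i) = (1 + x) * (\<Prod>i<n. 1 + (x * q) * q ^ i)"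
    by (subst prod.lessThan_Suc_shift) (simp add: mult.assoc)
  also have "\<dots> = (1 + x) * (\<Sum>k\<le>n. qbinomial q n k * q ^ (k choose 2) * (x * q) ^ k)"
    by (simp only: Suc.IH)
  also have "\<dots> = (\<Sum>k\<le>n. qbinomial q n k * q ^ (k choose 2) * q ^ k * x ^ k)
      + (\<Sum>k\<le>n. qbinomial q n k * q ^ (Suc k choose 2) * x ^ Suc k)"
    by (simp add: distrib_right sum_distrib_left Suc_choose_two power_add
        power_mult_distrib sum.distrib algebra_simps)
  also have "(\<Sum>k\<le>n. qbinomial q n k * q ^ (k choose 2) * q ^ k * x ^ k)
      = 1 + (\<Sum>k\<le>n. qbinomial q n (Suc k) * q ^ Suc k * q ^ (Suc k choose 2) * x ^ Suc k)"
  proof -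
    have "(\<Sum>k\<le>n. qbinomial q n (Suc k) * q ^ Suc k * q ^ (Suc k choose 2) * x ^ Suc k)
        = (\<Sum>k\<le>Suc n. qbinomial q n k * q ^ (k choose 2) * q ^ k * x ^ k) - qbinomial q n 0"
      by (subst sum.atMost_Suc_shift) (simp add: numeral_2_eq_2 algebra_simps)
    also have "\<dots> = (\<Sum>k\<le>n. qbinomial q n k * q ^ (k choose 2) * q ^ k * x ^ k) - 1"
      by (cases n) (simp_all add: qbinomial_eq_0)
    finally show ?thesis by simp
  qed
  also have "1 + (\<Sum>k\<le>n. qbinomial q n (Suc k) * q ^ Suc k * q ^ (Suc k choose 2) * x ^ Suc k)
      + (\<Sum>k\<le>n. qbinomial q n k * q ^ (Suc k choose 2) * x ^ Suc k)
      = (\<Sum>k\<le>Suc n. qbinomial q (Suc n) k * q ^ (k choose 2) * x ^ k)"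
    by (subst sum.atMost_Suc_shift) (simp add: numeral_2_eq_2 sum.distrib algebra_simps)
  finally show ?case .
qed

definition qfact :: "'a::comm_ring_1 \<Rightarrow> nat \<Rightarrow> 'a" where
  "qfact q n = (\<Prod>i<n. 1 - q ^ Suc i)"

lemma qfact_0 [simp]: "qfact q 0 = 1"
  by (simp add: qfact_def)

lemma qfact_Suc: "qfact q (Suc n) = qfact q n * (1 - q ^ Suc n)"
  by (simp add: qfact_def)

lemma qbinomial_mult_qfact:
  "k \<le> n \<Longrightarrow> qbinomial q n k * qfact q k * qfact q (n - k) = qfact q n"
proof (induction n arbitrary: k)
  case 0
  thus ?case by simp
next
  case (Suc n)
  show ?case
  proof (cases k)
    case 0
    thus ?thesis by simp
  next
    case (Suc j)
    with Suc.prems have "j \<le> n" by simp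
    have first: "q ^ Suc j * qbinomial q n (Suc j) * qfact q (Suc j) * qfact q (n - j)
        = qfact q n * (q ^ Suc j - q ^ Suc n)"
    proof (cases "j = n")
      case False
      with \<open>j \<le> n\<close> have j: "j < n" by simp
      hence "qfact q (n - j) = qfact q (n - Suc j) * (1 - q ^ (n - j))"
        by (metis Suc_diff_Suc qfact_Suc)
      hence "q ^ Suc j * qbinomial q n (Suc j) * qfact q (Suc j) * qfact q (n - j)
          = q ^ Suc j * (qbinomial q n (Suc j) * qfact q (Suc j) * qfact q (n - Suc j))
            * (1 - q ^ (n - j))"
        by (simp add: mult_ac)
      also have "\<dots> = q ^ Suc j * qfact q n * (1 - q ^ (n - j))"
        using Suc.IH[of "Suc j"] j by (simp only: Suc_le_eq)
      also have "\<dots> = qfact q n * (q ^ Suc j - q ^ Suc j * q ^ (n - j))"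
        by (simp add: right_diff_distrib mult_ac)
      also have "q ^ Suc j * q ^ (n - j) = q ^ Suc n"
        using j power_add[of q "Suc j" "n - j"] by simp
      finally show ?thesis .
    qed (simp add: qbinomial_eq_0)
    have "qbinomial q n j * qfact q (Suc j) * qfact q (n - j)
        = (qbinomial q n j * qfact q j * qfact q (n - j)) * (1 - q ^ Suc j)"
      by (simp add: qfact_Suc mult_ac)
    also have "\<dots> = qfact q n * (1 - q ^ Suc j)"
      by (simp only: Suc.IH[OF \<open>j \<le> n\<close>])
    finally have second: "qbinomial q n j * qfact q (Suc j) * qfact q (n - j)
        = qfact q n * (1 - q ^ Suc j)" .
    have "qbinomial q (Suc n) k * qfact q k * qfact q (Suc n - k)
        = q ^ Suc j * qbinomial q n (Suc j) * qfact q (Suc j) * qfact q (n - j)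
          + qbinomial q n j * qfact q (Suc j) * qfact q (n - j)"
      using \<open>k = Suc j\<close> by (simp add: algebra_simps)
    also have "\<dots> = qfact q n * (q ^ Suc j - q ^ Suc n) + qfact q n * (1 - q ^ Suc j)"
      by (simp only: first second)
    also have "\<dots> = qfact q (Suc n)"
      by (simp add: qfact_Suc algebra_simps)
    finally show ?thesis .
  qed
qed

lemma qfact_LIMSEQ:
  fixes q :: complex
  assumes "norm q < 1"
  shows "qfact q \<longlonglongrightarrow> qpoch_inf q q"
proof -
  have "qfact q = (\<lambda>n. \<Prod>k<n. 1 - q * q ^ k)"
    by (simp add: fun_eq_iff qfact_def)
  thus ?thesis using qpoch_inf_LIMSEQ[OF assms, of q] by simp
qed

lemma qfact_nonzero:
  fixes q :: complex
  assumes "norm q < 1"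
  shows "qfact q n \<noteq> 0"
proof -
  have "q ^ Suc i \<noteq> 1" for i
    using power_neq_one_if_norm_less_one[OF assms] by blast
  thus ?thesis by (simp add: qfact_def)
qed

lemma qbinomial_bounded:
  fixes q :: complex
  assumes "norm q < 1"
  obtains K where "\<And>n k. norm (qbinomial q n k) \<le> K"
proof -
  obtain K1 where K1: "K1 > 0" "\<And>n. norm (qfact q n) \<le> K1"
    using convergent_imp_Bseq[OF convergentI[OF qfact_LIMSEQ[OF assms]]] by (auto simp: Bseq_def)
  obtain K2 where K2: "K2 > 0" "\<And>n. norm (inverse (qfact q n)) \<le> K2"
    using Bfun_inverse[OF qfact_LIMSEQ[OF assms] qpoch_inf_self_nonzero[OF assms]]
    by (auto simp: Bseq_def)
  have "norm (qbinomial q n k) \<le> K1 * K2 * K2" for n k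
  proof (cases "k \<le> n")
    case True
    have "qbinomial q n k = qfact q n * inverse (qfact q k) * inverse (qfact q (n - k))"
      using qbinomial_mult_qfact[OF True] qfact_nonzero[OF assms] by (auto simp: field_simps)
    also have "norm \<dots> \<le> K1 * K2 * K2"
      unfolding norm_mult using K1 K2 by (intro mult_mono) auto
    finally show ?thesis .
  next
    case False
    thus ?thesis using K1 K2 by (simp add: qbinomial_eq_0)
  qed
  thus ?thesis using that by blast
qed

lemma filterlim_nat_int_add_const: "filterlim (\<lambda>n. nat (int n + i)) at_top sequentially"
  unfolding filterlim_at_top eventually_sequentially
proof
  fix m :: nat
  show "\<exists>n0. \<forall>n\<ge>n0. m \<le> nat (int n + i)"
    by (rule exI[of _ "m + nat (- i)"]) auto
qed

lemma qbinomial_central_LIMSEQ: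
  fixes q :: complex
  assumes "norm q < 1"
  shows "(\<lambda>n. if \<bar>j\<bar> \<le> int n then qbinomial q (2 * n) (nat (int n + j)) else 0)
           \<longlonglongrightarrow> inverse (qpoch_inf q q)"
proof -
  let ?Q = "qpoch_inf q q"
  have shifted: "(\<lambda>n. qfact q (nat (int n + i))) \<longlonglongrightarrow> ?Q" for i
    by (rule filterlim_compose[OF qfact_LIMSEQ[OF assms] filterlim_nat_int_add_const])
  have doubled: "(\<lambda>n. qfact q (2 * n)) \<longlonglongrightarrow> ?Q"
    by (rule filterlim_compose[OF qfact_LIMSEQ[OF assms] mult_nat_left_at_top]) simp
  have "(\<lambda>n. qfact q (2 * n) * inverse (qfact q (nat (int n + j))) * inverse (qfact q (nat (int n + - j))))
      \<longlonglongrightarrow> ?Q * inverse ?Q * inverse ?Q"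
    by (intro tendsto_intros doubled shifted qpoch_inf_self_nonzero[OF assms])
  moreover have "?Q * inverse ?Q * inverse ?Q = inverse ?Q"
    using qpoch_inf_self_nonzero[OF assms] by simp
  moreover have "eventually (\<lambda>n. qfact q (2 * n) * inverse (qfact q (nat (int n + j)))
      * inverse (qfact q (nat (int n + - j)))
      = (if \<bar>j\<bar> \<le> int n then qbinomial q (2 * n) (nat (int n + j)) else 0)) sequentially"
    unfolding eventually_sequentially
  proof (intro exI allI impI)
    fix n assume "nat \<bar>j\<bar> \<le> n"
    hence j: "\<bar>j\<bar> \<le> int n" by simp
    hence "nat (int n + j) \<le> 2 * n" and "2 * n - nat (int n + j) = nat (int n + - j)"
      by linarith+
    with qbinomial_mult_qfact[of "nat (int n + j)" "2 * n" q] j qfact_nonzero[OF assms]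
    show "qfact q (2 * n) * inverse (qfact q (nat (int n + j))) * inverse (qfact q (nat (int n + - j)))
      = (if \<bar>j\<bar> \<le> int n then qbinomial q (2 * n) (nat (int n + j)) else 0)"
      by (auto simp: field_simps)
  qed
  ultimately show ?thesis
    by (simp add: Lim_transform_eventually)
qed

section \<open>The Jacobi triple product\<close>

definition triangular :: "int \<Rightarrow> int" where
  "triangular m = m * (m - 1) div 2"

lemma two_mult_triangular: "2 * triangular m = m * (m - 1)"
  unfolding triangular_def by simp

lemma triangular_add: "triangular (m + n) = triangular m + triangular n + m * n"
proof -
  have "2 * triangular (m + n) = 2 * (triangular m + triangular n + m * n)"
    unfolding distrib_left two_mult_triangular by (simp add: algebra_simps)
  thus ?thesis by simp
qed

lemma triangular_of_nat: "triangular (int k) = int (k choose 2)"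
  by (cases k) (simp_all add: triangular_def choose_two zdiv_int algebra_simps)

lemma power_int_minus_left:
  fixes z :: "'a::field"
  shows "(- z) powi j = (-1) powi j * z powi j"
  using power_int_mult_distrib[of "-1" z j] by simp

lemma neg_one_power_int_mult_self: "(-1 :: 'a::field) powi j * (-1) powi j = 1"
  by (simp flip: power_int_mult_distrib)

definition theta_term :: "complex \<Rightarrow> complex \<Rightarrow> int \<Rightarrow> complex" where
  "theta_term q z j = (-1) powi j * q powi triangular j * z powi j"

lemma prod_lessThan_add:
  fixes f :: "nat \<Rightarrow> 'a::comm_monoid_mult"
  shows "(\<Prod>i<m + n. f i) = (\<Prod>i<m. f i) * (\<Prod>i<n. f (m + i))"
  by (induction n) (simp_all add: mult.assoc)

lemma prod_lessThan_reflect: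
  fixes g :: "nat \<Rightarrow> 'a::comm_monoid_mult"
  shows "(\<Prod>i<n. g (n - i)) = (\<Prod>i<n. g (Suc i))"
proof (induction n)
  case (Suc n)
  have "(\<Prod>i<Suc n. g (Suc n - i)) = g (Suc n) * (\<Prod>i<n. g (n - i))"
    by (subst prod.lessThan_Suc_shift) simp
  thus ?case using Suc by (simp add: mult.commute)
qed simp

lemma sum_lessThan_eq_choose_two: "(\<Sum>i<n. i) = n choose 2"
  by (simp add: lessThan_atLeast0 Sum_Ico_nat choose_two)

lemma theta_term_scaled:
  fixes q x :: complex
  assumes "q \<noteq> 0"
  shows "theta_term q (- x * q ^ n) j = q powi (triangular j + int n * j) * x powi j"
proof -
  have "(- x * q ^ n) powi j = (-1) powi j * x powi j * q powi (int n * j)"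
    by (simp only: power_int_mult_distrib power_int_minus_left[of x] power_int_power)
  hence "theta_term q (- x * q ^ n) j
      = ((-1) powi j * (-1) powi j) * (q powi triangular j * q powi (int n * j)) * x powi j"
    by (simp add: theta_term_def mult_ac)
  also have "\<dots> = q powi (triangular j + int n * j) * x powi j"
    using assms by (simp add: neg_one_power_int_mult_self power_int_add)
  finally show ?thesis .
qed

lemma qbinomial_term_shift:
  fixes q x :: complex
  assumes q: "q \<noteq> 0" and x: "x \<noteq> 0" and j: "0 \<le> int n + j"
  shows "q ^ (nat (int n + j) choose 2) * x ^ nat (int n + j)
       = q ^ (n choose 2) * x ^ n * theta_term q (- x * q ^ n) j"
proof -
  have "int (nat (int n + j) choose 2) = triangular (int n + j)"
    using j triangular_of_nat[of "nat (int n + j)"] by simp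
  hence "q ^ (nat (int n + j) choose 2) * x ^ nat (int n + j)
      = q powi triangular (int n + j) * x powi (int n + j)"
    using j by (metis power_int_of_nat int_nat_eq)
  also have "\<dots> = q powi triangular (int n) * x powi int n
      * (q powi (triangular j + int n * j) * x powi j)"
    using q x by (simp add: triangular_add power_int_add mult_ac)
  also have "\<dots> = q ^ (n choose 2) * x ^ n * theta_term q (- x * q ^ n) j"
    by (simp only: theta_term_scaled[OF q] triangular_of_nat power_int_of_nat)
  finally show ?thesis .
qed

lemma finite_jacobi_triple_product:
  fixes q z :: complex
  assumes q: "q \<noteq> 0" and z: "z \<noteq> 0"
  shows "(\<Prod>i<n. (1 - z * q ^ i) * (1 - q ^ Suc i / z))
       = (\<Sum>j\<in>{- int n..int n}. qbinomial q (2 * n) (nat (int n + j)) * theta_term q z j)"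
proof -
  define x where "x = - z / q ^ n"
  have x: "x \<noteq> 0" and z_eq: "z = - x * q ^ n"
    using q z by (auto simp: x_def)
  have "(\<Prod>i<2 * n. 1 + x * q ^ i) = (\<Prod>i<n. 1 + x * q ^ i) * (\<Prod>i<n. 1 + x * q ^ (n + i))"
    using prod_lessThan_add[of "\<lambda>i. 1 + x * q ^ i" n n] by (simp add: mult_2)
  also have "(\<Prod>i<n. 1 + x * q ^ (n + i)) = (\<Prod>i<n. 1 - z * q ^ i)"
    by (simp add: z_eq power_add mult_ac)
  also have "(\<Prod>i<n. 1 + x * q ^ i) = (\<Prod>i<n. (x * q ^ i) * (1 - q ^ (n - i) / z))"
  proof (rule prod.cong[OF refl])
    fix i assume "i \<in> {..<n}"
    hence "q ^ i * q ^ (n - i) = q ^ n" by (simp flip: power_add)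
    thus "1 + x * q ^ i = (x * q ^ i) * (1 - q ^ (n - i) / z)"
      using q x by (simp add: z_eq field_simps)
  qed
  also have "\<dots> = q ^ (n choose 2) * x ^ n * (\<Prod>i<n. 1 - q ^ Suc i / z)"
    by (simp add: prod.distrib power_sum[symmetric] sum_lessThan_eq_choose_two mult_ac
        prod_lessThan_reflect[of "\<lambda>k. 1 - q ^ k / z"])
  finally have by_factors: "(\<Prod>i<2 * n. 1 + x * q ^ i)
      = q ^ (n choose 2) * x ^ n * (\<Prod>i<n. (1 - z * q ^ i) * (1 - q ^ Suc i / z))"
    by (simp add: prod.distrib mult_ac)
  have "(\<Prod>i<2 * n. 1 + x * q ^ i)
      = (\<Sum>k\<le>2 * n. qbinomial q (2 * n) k * q ^ (k choose 2) * x ^ k)"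
    by (rule qbinomial_theorem)
  also have "\<dots> = (\<Sum>j\<in>{- int n..int n}. qbinomial q (2 * n) (nat (int n + j))
      * (q ^ (nat (int n + j) choose 2) * x ^ nat (int n + j)))"
    by (rule sum.reindex_bij_witness[where i = "\<lambda>j. nat (int n + j)" and j = "\<lambda>k. int k - int n"])
      (auto simp: mult.assoc)
  also have "\<dots> = q ^ (n choose 2) * x ^ n
      * (\<Sum>j\<in>{- int n..int n}. qbinomial q (2 * n) (nat (int n + j)) * theta_term q z j)"
    unfolding sum_distrib_left
  proof (intro sum.cong refl)
    fix j assume "j \<in> {- int n..int n}"
    hence "0 \<le> int n + j" by simp
    hence "q ^ (nat (int n + j) choose 2) * x ^ nat (int n + j)
        = q ^ (n choose 2) * x ^ n * theta_term q z j"
      using qbinomial_term_shift[OF q x] by (simp add: z_eq)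
    thus "qbinomial q (2 * n) (nat (int n + j)) * (q ^ (nat (int n + j) choose 2) * x ^ nat (int n + j))
        = q ^ (n choose 2) * x ^ n * (qbinomial q (2 * n) (nat (int n + j)) * theta_term q z j)"
      by (simp only: mult_ac)
  qed
  finally show ?thesis
    using by_factors q x by simp
qed

lemma summable_power_choose_two:
  fixes r y :: real
  assumes r: "0 \<le> r" "r < 1" and y: "0 \<le> y"
  shows "summable (\<lambda>k. r ^ (k choose 2) * y ^ k)"
proof -
  have "(\<lambda>n. r ^ n * y) \<longlonglongrightarrow> 0 * y"
    using r by (intro tendsto_mult LIMSEQ_power_zero tendsto_const) auto
  hence "eventually (\<lambda>n. r ^ n * y < 1/2) sequentially"
    by (intro order_tendstoD) auto
  then obtain N where N: "\<And>n. n \<ge> N \<Longrightarrow> r ^ n * y < 1/2"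
    by (auto simp: eventually_sequentially)
  show ?thesis
  proof (rule summable_ratio_test[of "1/2" N])
    fix n assume "n \<ge> N"
    hence "(r ^ n * y) * (r ^ (n choose 2) * y ^ n) \<le> 1/2 * (r ^ (n choose 2) * y ^ n)"
      using N r y by (intro mult_right_mono) (auto simp: less_imp_le)
    thus "norm (r ^ (Suc n choose 2) * y ^ Suc n) \<le> 1/2 * norm (r ^ (n choose 2) * y ^ n)"
      using r y by (simp add: Suc_choose_two power_add mult_ac)
  qed simp
qed

lemma norm_theta_term_nonneg_index:
  "norm (theta_term q z (int k)) = norm q ^ (k choose 2) * norm z ^ k"
  by (simp add: theta_term_def triangular_of_nat norm_mult norm_power_int norm_power
      flip: power_int_of_nat)

lemma norm_theta_term_neg_index:
  "norm (theta_term q z (- int k - 1))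
     = norm q / norm z * (norm q ^ (k choose 2) * (norm q ^ 2 / norm z) ^ k)"
proof -
  have "2 * triangular (- int k - 1) = 2 * (triangular (int k) + 2 * int k + 1)"
    unfolding distrib_left two_mult_triangular by (simp add: algebra_simps)
  hence "triangular (- int k - 1) = int ((k choose 2) + 2 * k + 1)"
    by (simp add: triangular_of_nat)
  hence "norm (q powi triangular (- int k - 1)) = norm q ^ ((k choose 2) + 2 * k + 1)"
    by (simp only: power_int_of_nat norm_power)
  moreover have "- int k - 1 = - int (Suc k)"
    by simp
  hence "norm (z powi (- int k - 1)) = inverse (norm z ^ Suc k)"
    by (simp only: power_int_minus power_int_of_nat norm_inverse norm_power)
  moreover have "norm ((-1 :: complex) powi j) = 1" for j
    by (simp add: norm_power_int)
  ultimately have "norm (theta_term q z (- int k - 1))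
      = norm q ^ ((k choose 2) + 2 * k + 1) * inverse (norm z ^ Suc k)"
    by (simp add: theta_term_def norm_mult)
  also have "\<dots> = norm q / norm z * (norm q ^ (k choose 2) * (norm q ^ 2 / norm z) ^ k)"
    by (cases "z = 0") (simp_all add: power_add power_divide field_simps flip: power_mult)
  finally show ?thesis .
qed

lemma summable_norm_theta_term:
  assumes "norm q < 1"
  shows "summable (\<lambda>k. norm (theta_term q z (int k)))"
    and "summable (\<lambda>k. norm (theta_term q z (- int k - 1)))"
  unfolding norm_theta_term_nonneg_index norm_theta_term_neg_index
  using assms by (auto intro!: summable_mult summable_power_choose_two)

lemma sum_int_symmetric_split:
  fixes g :: "int \<Rightarrow> 'a::comm_monoid_add"
  shows "(\<Sum>j\<in>{- int n..int n}. g j) = (\<Sum>k<Suc n. g (int k)) + (\<Sum>k<n. g (- int k - 1))"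
proof (induction n)
  case (Suc n)
  have "{- int (Suc n)..int (Suc n)} = insert (- int n - 1) (insert (int n + 1) {- int n..int n})"
    by auto
  hence "(\<Sum>j\<in>{- int (Suc n)..int (Suc n)}. g j)
      = g (- int n - 1) + (g (int n + 1) + (\<Sum>j\<in>{- int n..int n}. g j))"
    by simp
  thus ?case using Suc by (simp add: add_ac)
qed simp

lemma has_sum_int_by_halves:
  fixes f :: "int \<Rightarrow> 'a::banach"
  assumes "summable (\<lambda>k. norm (f (int k)))" and "summable (\<lambda>k. norm (f (- int k - 1)))"
  shows "(f has_sum ((\<Sum>k. f (int k)) + (\<Sum>k. f (- int k - 1)))) UNIV"
proof -
  have pos: "((\<lambda>k. f (int k)) has_sum (\<Sum>k. f (int k))) UNIV"
    and neg: "((\<lambda>k. f (- int k - 1)) has_sum (\<Sum>k. f (- int k - 1))) UNIV"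
    using assms by (auto intro!: norm_summable_imp_has_sum summable_sums summable_norm_cancel)
  have "bij_betw int UNIV {0..}"
    by (rule bij_betwI[where g = nat]) auto
  with pos have "(f has_sum (\<Sum>k. f (int k))) {0..}"
    using has_sum_reindex_bij_betw[of int UNIV "{0..}" f] by simp
  moreover have "bij_betw (\<lambda>k. - int k - 1) UNIV {..<0}"
    by (rule bij_betwI[where g = "\<lambda>j. nat (- j - 1)"]) auto
  with neg have "(f has_sum (\<Sum>k. f (- int k - 1))) {..<0}"
    using has_sum_reindex_bij_betw[of "\<lambda>k. - int k - 1" UNIV "{..<0}" f] by simp
  ultimately have "(f has_sum ((\<Sum>k. f (int k)) + (\<Sum>k. f (- int k - 1)))) ({0..} \<union> {..<0})"
    by (rule has_sum_Un_disjoint) auto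
  moreover have "{0..} \<union> {..<0::int} = UNIV" by auto
  ultimately show ?thesis by simp
qed

lemma tendsto_weighted_symmetric_sums:
  fixes c :: "nat \<Rightarrow> int \<Rightarrow> 'a::{real_normed_field, banach}"
  assumes lim: "\<And>j. (\<lambda>n. c n j) \<longlonglongrightarrow> L"
    and bound: "\<And>n j. norm (c n j) \<le> K"
    and support: "\<And>n j. int n < \<bar>j\<bar> \<Longrightarrow> c n j = 0"
    and f_pos: "summable (\<lambda>k. norm (f (int k)))"
    and f_neg: "summable (\<lambda>k. norm (f (- int k - 1)))"
  shows "(\<lambda>n. \<Sum>j\<in>{- int n..int n}. c n j * f j)
           \<longlonglongrightarrow> L * ((\<Sum>k. f (int k)) + (\<Sum>k. f (- int k - 1)))"
proof -
  define s where "s n k = c n (int k) * f (int k) + c n (- int k - 1) * f (- int k - 1)" for n k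
  have partial: "(\<Sum>j\<in>{- int n..int n}. c n j * f j) = suminf (s n)" for n
  proof -
    have "(\<Sum>k<n. c n (- int k - 1) * f (- int k - 1))
        = (\<Sum>k<Suc n. c n (- int k - 1) * f (- int k - 1))"
      using support[of n "- int n - 1"] by simp
    hence "(\<Sum>j\<in>{- int n..int n}. c n j * f j) = (\<Sum>k<Suc n. s n k)"
      by (simp add: sum_int_symmetric_split s_def sum.distrib)
    also have "\<dots> = suminf (s n)"
      by (rule suminf_finite[symmetric]) (auto simp: s_def support)
    finally show ?thesis .
  qed
  have "(\<lambda>n. suminf (s n)) \<longlonglongrightarrow> (\<Sum>k. L * f (int k) + L * f (- int k - 1))"
  proof (rule tannerys_theorem[where M = "\<lambda>k. K * (norm (f (int k)) + norm (f (- int k - 1)))",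
        THEN conjunct2, THEN conjunct2])
    show "(\<lambda>n. s n k) \<longlonglongrightarrow> L * f (int k) + L * f (- int k - 1)" for k
      unfolding s_def by (intro tendsto_intros lim)
    show "summable (\<lambda>k. K * (norm (f (int k)) + norm (f (- int k - 1))))"
      using f_pos f_neg by (intro summable_mult summable_add)
    have "norm (s n k) \<le> K * (norm (f (int k)) + norm (f (- int k - 1)))" for n k
    proof -
      have "norm (s n k) \<le> norm (c n (int k)) * norm (f (int k))
          + norm (c n (- int k - 1)) * norm (f (- int k - 1))"
        unfolding s_def by (metis norm_mult norm_triangle_ineq)
      also have "\<dots> \<le> K * norm (f (int k)) + K * norm (f (- int k - 1))"
        by (intro add_mono mult_right_mono bound) auto
      finally show ?thesis by (simp add: distrib_left)
    qed
    thus "eventually (\<lambda>(k, n). norm (s n k) \<le> K * (norm (f (int k)) + norm (f (- int k - 1))))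
        (at_top \<times>\<^sub>F sequentially)"
      by (simp add: case_prod_unfold)
  qed simp
  also have "(\<Sum>k. L * f (int k) + L * f (- int k - 1))
      = L * ((\<Sum>k. f (int k)) + (\<Sum>k. f (- int k - 1)))"
    using summable_norm_cancel[OF f_pos] summable_norm_cancel[OF f_neg]
    by (simp add: suminf_add[symmetric] suminf_mult summable_mult distrib_left)
  finally show ?thesis
    by (simp add: partial)
qed

theorem jacobi_triple_product:
  fixes q z :: complex
  assumes q0: "q \<noteq> 0" and q: "norm q < 1" and z: "z \<noteq> 0"
  shows "(theta_term q z has_sum (qpoch_inf q q * qtheta z q)) UNIV"
proof -
  let ?Q = "qpoch_inf q q"
  let ?S = "(\<Sum>k. theta_term q z (int k)) + (\<Sum>k. theta_term q z (- int k - 1))"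
  \<comment> \<open>The guard makes c n vanish outside {-n..n}; for j < -n the index nat (n + j)
    would otherwise truncate to 0, where qbinomial q (2n) 0 = 1.\<close>
  define c where
    "c n j = (if \<bar>j\<bar> \<le> int n then qbinomial q (2 * n) (nat (int n + j)) else 0)" for n j
  obtain K where K: "\<And>n k. norm (qbinomial q n k) \<le> K"
    using qbinomial_bounded[OF q] by blast
  have bound: "norm (c n j) \<le> K" for n j
    using K K[of 0 0] by (auto simp: c_def)
  have "(\<lambda>n. \<Sum>j\<in>{- int n..int n}. c n j * theta_term q z j) \<longlonglongrightarrow> inverse ?Q * ?S"
    by (rule tendsto_weighted_symmetric_sums[OF _ bound _ summable_norm_theta_term[OF q]])
      (simp_all add: c_def qbinomial_central_LIMSEQ[OF q])
  moreover have "(\<Prod>i<n. 1 - z * q ^ i) * (\<Prod>i<n. 1 - (q / z) * q ^ i)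
      = (\<Sum>j\<in>{- int n..int n}. c n j * theta_term q z j)" for n
  proof -
    have "(\<Prod>i<n. 1 - z * q ^ i) * (\<Prod>i<n. 1 - (q / z) * q ^ i)
        = (\<Prod>i<n. (1 - z * q ^ i) * (1 - q ^ Suc i / z))"
      by (simp add: prod.distrib)
    also have "\<dots> = (\<Sum>j\<in>{- int n..int n}. c n j * theta_term q z j)"
      unfolding finite_jacobi_triple_product[OF q0 z] by (intro sum.cong) (auto simp: c_def)
    finally show ?thesis .
  qed
  moreover have "(\<lambda>n. (\<Prod>i<n. 1 - z * q ^ i) * (\<Prod>i<n. 1 - (q / z) * q ^ i)) \<longlonglongrightarrow> qtheta z q"
    unfolding qtheta_def by (intro tendsto_mult qpoch_inf_LIMSEQ q)
  ultimately have "inverse ?Q * ?S = qtheta z q"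
    using LIMSEQ_unique by force
  hence "?S = ?Q * qtheta z q"
    using qpoch_inf_self_nonzero[OF q] by (simp add: field_simps)
  thus ?thesis
    using has_sum_int_by_halves[OF summable_norm_theta_term[OF q, where z = z]] by simp
qed

section \<open>Pairing two Jacobi series\<close>

lemma has_sum_product:
  fixes f g :: "'a \<Rightarrow> 'b::{real_normed_field, banach}"
  assumes f: "(f has_sum A) UNIV" and g: "(g has_sum B) UNIV"
    and f_abs: "(\<lambda>x. norm (f x)) summable_on UNIV"
    and g_abs: "(\<lambda>y. norm (g y)) summable_on UNIV"
  shows "((\<lambda>(x, y). f x * g y) has_sum (A * B)) UNIV"
proof -
  have "(\<lambda>p. norm (case p of (x, y) \<Rightarrow> f x * g y)) summable_on Sigma UNIV (\<lambda>_. UNIV)"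
  proof (rule Infinite_Sum.abs_summable_on_Sigma_iff[THEN iffD2], intro conjI ballI)
    show "(\<lambda>y. norm (case (x, y) of (x, y) \<Rightarrow> f x * g y)) summable_on UNIV" for x
      using g_abs by (simp add: norm_mult summable_on_cmult_right)
    show "(\<lambda>x. norm (infsum (\<lambda>y. norm (case (x, y) of (x, y) \<Rightarrow> f x * g y)) UNIV)) summable_on UNIV"
      using f_abs by (simp add: norm_mult infsum_cmult_right' summable_on_cmult_left abs_mult)
  qed
  hence "(\<lambda>(x, y). f x * g y) summable_on Sigma UNIV (\<lambda>_. UNIV)"
    by (rule abs_summable_summable)
  hence "((\<lambda>(x, y). f x * g y) has_sum (A * B)) (Sigma UNIV (\<lambda>_. UNIV))"
    using f g by (intro has_sum_SigmaI[where g = "\<lambda>x. f x * B"])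
      (auto intro: has_sum_cmult_left has_sum_cmult_right)
  thus ?thesis by simp
qed

lemma abs_summable_theta_term:
  assumes "norm q < 1"
  shows "(\<lambda>j. norm (theta_term q z j)) summable_on UNIV"
  using has_sum_int_by_halves[of "\<lambda>j. norm (theta_term q z j)"] summable_norm_theta_term[OF assms]
  by (auto simp: summable_on_def)

lemma has_sum_reindex_diagonal:
  fixes g :: "int \<times> int \<Rightarrow> 'a::topological_comm_monoid_add"
  assumes "(g has_sum S) UNIV"
  shows "((\<lambda>(m, n). g ((m + n) div 2, (m - n) div 2)) has_sum S) {(m, n). even (m + n)}"
  using assms
  by (rule has_sum_reindex_bij_witness[where i = "\<lambda>(m, n). ((m + n) div 2, (m - n) div 2)"
      and j = "\<lambda>(i, j). (i + j, i - j)", THEN iffD1, rotated -1])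
    (auto, presburger)

lemma neg_one_power_int_parity: "(-1 :: 'a::field) powi k = (if even k then 1 else -1)"
proof (cases "even k")
  case True
  then obtain t where "k = 2 * t" by (auto elim!: evenE)
  thus ?thesis by (simp add: power_int_mult)
next
  case False
  then obtain t where "k = 2 * t + 1" by (auto elim!: oddE)
  thus ?thesis by (simp add: power_int_add power_int_mult)
qed

lemma theta_term_sign_pair:
  "theta_term q (- b) m * theta_term q c n + theta_term q b m * theta_term q (- c) n
     = ((-1) powi m + (-1) powi n) * (q powi triangular m * b powi m) * (q powi triangular n * c powi n)"
  using neg_one_power_int_mult_self[of m, where 'a = complex]
    neg_one_power_int_mult_self[of n, where 'a = complex]
  unfolding theta_term_def power_int_minus_left[of b] power_int_minus_left[of c]
  by algebra

lemma theta_term_sign_pair_odd: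
  assumes "odd (m + n)"
  shows "theta_term q (- b) m * theta_term q c n + theta_term q b m * theta_term q (- c) n = 0"
  using assms by (auto simp: theta_term_sign_pair neg_one_power_int_parity)

lemma theta_term_sign_pair_even:
  fixes q b c :: complex
  assumes q: "q \<noteq> 0" and b: "b \<noteq> 0" and c: "c \<noteq> 0"
  shows "theta_term q (- b) (i + j) * theta_term q c (i - j) + theta_term q b (i + j) * theta_term q (- c) (i - j)
       = 2 * (theta_term (q^2) (b * c) i * theta_term (q^2) (b * q / c) j)"
proof -
  have sign: "(-1 :: complex) powi (i + j) + (-1) powi (i - j) = 2 * ((-1) powi i * (-1) powi j)"
    by (auto simp: neg_one_power_int_parity)
  have "2 * (triangular (i + j) + triangular (i - j)) = 2 * (2 * triangular i + 2 * triangular j + j)"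
    unfolding distrib_left two_mult_triangular by (simp add: algebra_simps)
  hence "triangular (i + j) + triangular (i - j) = 2 * triangular i + 2 * triangular j + j"
    by simp
  hence qexp: "q powi triangular (i + j) * q powi triangular (i - j)
      = (q^2) powi triangular i * (q^2) powi triangular j * q powi j"
    using q by (simp add: power_int_power power_int_add [symmetric])
  have bexp: "b powi (i + j) * c powi (i - j) = (b * c) powi i * (b / c) powi j"
    using b c by (simp add: power_int_add power_int_diff power_int_mult_distrib power_int_divide_distrib)
  have "theta_term q (- b) (i + j) * theta_term q c (i - j) + theta_term q b (i + j) * theta_term q (- c) (i - j)
      = ((-1) powi (i + j) + (-1) powi (i - j))
        * (q powi triangular (i + j) * b powi (i + j)) * (q powi triangular (i - j) * c powi (i - j))"
    by (rule theta_term_sign_pair)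
  also have "\<dots> = 2 * ((-1) powi i * (-1) powi j)
      * ((q powi triangular (i + j) * q powi triangular (i - j)) * (b powi (i + j) * c powi (i - j)))"
    unfolding sign by (simp only: mult_ac)
  also have "\<dots> = 2 * (theta_term (q^2) (b * c) i * theta_term (q^2) (b * q / c) j)"
    unfolding qexp bexp using c
    by (simp add: theta_term_def power_int_mult_distrib power_int_divide_distrib field_simps)
  finally show ?thesis .
qed

lemma qtheta_sign_pair_times_qpoch:
  fixes q b c :: complex
  assumes q0: "q \<noteq> 0" and q: "norm q < 1" and b: "b \<noteq> 0" and c: "c \<noteq> 0"
  shows "(qpoch_inf q q)^2 * (qtheta (-b) q * qtheta c q + qtheta b q * qtheta (-c) q)
       = 2 * (qpoch_inf (q^2) (q^2))^2 * qtheta (b * c) (q^2) * qtheta (b * q / c) (q^2)"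
proof -
  define Q where "Q = qpoch_inf q q"
  define Q2 where "Q2 = qpoch_inf (q^2) (q^2)"
  have q2_0: "q^2 \<noteq> 0" and q2: "norm (q^2) < 1"
    using q0 q by (auto simp: norm_power power_less_one_iff)
  define F where
    "F = (\<lambda>(m, n). theta_term q (- b) m * theta_term q c n + theta_term q b m * theta_term q (- c) n)"
  define G where "G = (\<lambda>(i, j). theta_term (q^2) (b * c) i * theta_term (q^2) (b * q / c) j)"
  define diag where "diag = (\<lambda>(m, n). 2 * G ((m + n) div 2, (m - n) div 2))"
  have "((\<lambda>(m, n). theta_term q (- b) m * theta_term q c n) has_sum (Q * qtheta (-b) q * (Q * qtheta c q))) UNIV"
    and "((\<lambda>(m, n). theta_term q b m * theta_term q (- c) n) has_sum (Q * qtheta b q * (Q * qtheta (-c) q))) UNIV"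
    unfolding Q_def using b c q0 q
    by (intro has_sum_product jacobi_triple_product abs_summable_theta_term; simp)+
  hence "(F has_sum (Q * qtheta (-b) q * (Q * qtheta c q) + Q * qtheta b q * (Q * qtheta (-c) q))) UNIV"
    unfolding F_def by (rule has_sum_add[THEN has_sum_cong[THEN iffD1, rotated]]) auto
  moreover have "(G has_sum (Q2 * qtheta (b * c) (q^2) * (Q2 * qtheta (b * q / c) (q^2)))) UNIV"
    unfolding G_def Q2_def using b c q2_0 q2 q0
    by (intro has_sum_product jacobi_triple_product abs_summable_theta_term) auto
  hence "(diag has_sum (2 * (Q2 * qtheta (b * c) (q^2) * (Q2 * qtheta (b * q / c) (q^2)))))
      {(m, n). even (m + n)}"
    unfolding diag_def by (intro has_sum_reindex_diagonal has_sum_cmult_right)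
  moreover have "F p = (if p \<in> {(m, n). even (m + n)} then diag p else 0)" for p
  proof (cases p)
    case (Pair m n)
    show ?thesis
    proof (cases "even (m + n)")
      case True
      then obtain i where i: "m + n = 2 * i"
        by (rule evenE)
      hence m: "m = i + (m - i)" and n: "n = i - (m - i)" and "(m - n) div 2 = m - i"
        by simp_all
      hence "F (m, n) = diag (m, n)"
        using theta_term_sign_pair_even[OF q0 b c, of i "m - i", folded m n] i
        by (simp add: F_def diag_def G_def)
      thus ?thesis using True Pair by simp
    qed (simp add: Pair F_def theta_term_sign_pair_odd)
  qed
  ultimately have "Q * qtheta (-b) q * (Q * qtheta c q) + Q * qtheta b q * (Q * qtheta (-c) q)
      = 2 * (Q2 * qtheta (b * c) (q^2) * (Q2 * qtheta (b * q / c) (q^2)))"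
    using has_sum_cong_neutral[of "{(m, n). even (m + n)}" UNIV diag F] has_sum_unique by fastforce
  thus ?thesis
    unfolding Q_def[symmetric] Q2_def[symmetric] by (simp add: power2_eq_square algebra_simps)
qed

lemma qtheta_sign_pair:
  fixes q b c :: complex
  assumes q: "norm q < 1" and b: "b \<noteq> 0" and c: "c \<noteq> 0"
  shows "(qpoch_inf q (q^2))^2 * (qtheta (-b) q * qtheta c q + qtheta b q * qtheta (-c) q)
       = 2 * qtheta (b * c) (q^2) * qtheta (b * q / c) (q^2)"
proof (cases "q = 0")
  case True
  thus ?thesis by (simp add: qtheta_def qpoch_inf_base_0 algebra_simps)
next
  case False
  have "norm (q^2) < 1"
    using q by (simp add: norm_power power_less_one_iff)
  hence "qpoch_inf (q^2) (q^2) \<noteq> 0"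
    by (rule qpoch_inf_self_nonzero)
  moreover have "(qpoch_inf (q^2) (q^2))^2 * ((qpoch_inf q (q^2))^2
        * (qtheta (-b) q * qtheta c q + qtheta b q * qtheta (-c) q))
      = (qpoch_inf (q^2) (q^2))^2 * (2 * qtheta (b * c) (q^2) * qtheta (b * q / c) (q^2))"
    using qtheta_sign_pair_times_qpoch[OF False q b c] qpoch_inf_self_eq_odd_even[OF q]
    by (simp add: power_mult_distrib mult_ac)
  ultimately show ?thesis by simp
qed

theorem mainTheorem12:
  fixes q a b c :: complex
  assumes "norm q < 1" and "a \<noteq> 0" and "b \<noteq> 0" and "c \<noteq> 0"
  shows "(qpoch_inf q (q^2))^2 *
           (qtheta a q * qtheta b q * qtheta (-c) q
          + qtheta a q * qtheta (-b) q * qtheta c q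
          + qtheta (-a) q * qtheta b q * qtheta c q)
       = qpoch_inf a q * qpoch_inf (q / a) q * qtheta (b * c) (q^2) * qtheta (b * q / c) (q^2)
       + qpoch_inf b q * qpoch_inf (q / b) q * qtheta (a * c) (q^2) * qtheta (a * q / c) (q^2)
       + qpoch_inf c q * qpoch_inf (q / c) q * qtheta (a * b) (q^2) * qtheta (a * q / b) (q^2)"
  using qtheta_sign_pair[OF assms(1,3,4)] qtheta_sign_pair[OF assms(1,2,4)]
    qtheta_sign_pair[OF assms(1,2,3)]
  unfolding qtheta_def[symmetric]
  by algebra

end
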